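(* There is an absolute constant $c>0$ with the following property. Let $\sigma>0$ and let $F$ be an entire function of exponential type at most $\sigma$ whose restriction to $\mathbb{R}$ is integrable, with $F(0)\ge 1$ and $L=\int_{-\infty}^\infty|F(x)|\,dx$. If $\omega\in\mathbb{C}$ satisfies $F(\omega)=0$, then \[ 1\le c\,L\,\sigma^{2}\,|\omega|\cosh\bigl(\sigma\,\mathrm{Im}(\omega)\bigr). \]
   Context: An entire function $F$ has exponential type at most $\sigma$ if for each $\epsilon>0$ there is $C_\epsilon$ with $|F(z)|\le C_\epsilon e^{\sigma(1+\epsilon)|z|}$ for all $z\in\mathbb{C}$. *)

theory Defs
  imports "HOL-Complex_Analysis.Complex_Analysis"
begin

definition exp_type_at_most :: "(complex \<Rightarrow> complex) \<Rightarrow> real \<Rightarrow> bool" where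
  "exp_type_at_most F \<sigma> \<longleftrightarrow>
     (\<forall>\<epsilon>>0. \<exists>C. \<forall>z. norm (F z) \<le> C * exp (\<sigma> * (1 + \<epsilon>) * norm z))"

end

theory Submission
  imports Defs
begin

text \<open>
  Let \<open>G\<close> be the primitive of \<open>F\<close> with \<open>G 0 = 0\<close>. Then \<open>\<bar>G\<bar> \<le> L\<close> on the real line and \<open>G\<close> again
  has exponential type \<open>\<sigma>\<close>, so a Phragmen-Lindeloef argument gives \<open>\<bar>G z\<bar> \<le> L exp (\<sigma> \<bar>Im z\<bar>)\<close>:
  for \<open>\<tau> > \<sigma>\<close> the function \<open>G w exp (i \<tau> w)\<close> is bounded on the closed upper half plane (directly
  in a cone around the imaginary axis, and in the two remaining sectors, whose opening is less
  than \<open>\<pi>/2\<close>, after damping with \<open>exp (- \<eta> (1 - i m) w\<^sup>2)\<close>), hence bounded by \<open>L\<close> there (after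
  damping with \<open>1 / (1 - i \<eta> w)\<close>). Cauchy's estimate on circles of radius \<open>1/\<sigma>\<close> turns this
  into \<open>\<bar>F' \<xi>\<bar> \<le> 2 e L \<sigma>\<^sup>2 exp (\<sigma> \<bar>Im \<xi>\<bar>)\<close>, and the mean value inequality on the segment
  from \<open>0\<close> to the zero \<open>\<omega>\<close> gives \<open>1 \<le> \<bar>F 0\<bar> \<le> 2 e L \<sigma>\<^sup>2 \<bar>\<omega>\<bar> exp (\<sigma> \<bar>Im \<omega>\<bar>)\<close>, which is at most
  \<open>4 e L \<sigma>\<^sup>2 \<bar>\<omega>\<bar> cosh (\<sigma> Im \<omega>)\<close>.
\<close>

section \<open>Phragmen-Lindeloef estimates\<close>

lemma tendsto_at_right_0_lowerbound:
  fixes f :: "real \<Rightarrow> real"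
  assumes "\<And>\<eta>. 0 < \<eta> \<Longrightarrow> a \<le> f \<eta>" and "(f \<longlongrightarrow> l) (at_right 0)"
  shows "a \<le> l"
  by (rule tendsto_lowerbound[OF assms(2)]) (auto intro!: eventually_at_rightI[of 0 1] assms(1))

lemma exp_linear_minus_quadratic_eventually_less:
  fixes A B \<eta> :: real
  assumes "\<eta> > 0"
  obtains R where "\<And>r. R \<le> r \<Longrightarrow> A * exp (B * r) * exp (- (\<eta> * r\<^sup>2)) < \<eta>"
proof
  fix r assume r: "max 1 (max ((\<bar>B\<bar> + 1) / \<eta>) (\<bar>A\<bar> / \<eta>)) \<le> r"
  then have "1 \<le> r" "\<bar>B\<bar> + 1 \<le> \<eta> * r" "\<bar>A\<bar> \<le> \<eta> * r"
    using assms by (auto simp: pos_divide_le_eq mult.commute)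
  then have "r * (B - \<eta> * r) \<le> r * (-1)"
    by (intro mult_left_mono) auto
  then have "B * r - \<eta> * r\<^sup>2 \<le> - r"
    by (simp add: power2_eq_square algebra_simps)
  then have "A * exp (B * r) * exp (- (\<eta> * r\<^sup>2)) \<le> \<bar>A\<bar> * exp (- r)"
    unfolding mult.assoc exp_add[symmetric] by (intro mult_mono) auto
  also have "\<dots> \<le> \<bar>A\<bar> / (1 + r)"
  proof -
    have "exp (- r) \<le> 1 / (1 + r)"
      using exp_ge_add_one_self[of r] \<open>1 \<le> r\<close> by (simp add: exp_minus field_simps)
    then show ?thesis
      by (simp add: mult_left_mono divide_inverse)
  qed
  also have "\<dots> < \<eta>"
    using \<open>\<bar>A\<bar> \<le> \<eta> * r\<close> \<open>1 \<le> r\<close> assms by (simp add: divide_less_eq algebra_simps)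
  finally show "A * exp (B * r) * exp (- (\<eta> * r\<^sup>2)) < \<eta>" .
qed

lemma maximum_modulus_frontier_superset:
  fixes f :: "complex \<Rightarrow> complex"
  assumes "open S" "bounded S" "S \<subseteq> T" "closed T"
    and "f holomorphic_on S" "continuous_on T f"
    and "\<And>z. z \<in> T - S \<Longrightarrow> norm (f z) \<le> B" and "\<xi> \<in> S"
  shows "norm (f \<xi>) \<le> B"
proof (rule maximum_modulus_frontier[of f S])
  have "closure S \<subseteq> T"
    using assms by (simp add: closure_minimal)
  then show "continuous_on (closure S) f"
    using assms(6) continuous_on_subset by blast
  show "norm (f z) \<le> B" if "z \<in> frontier S" for z
    using that \<open>closure S \<subseteq> T\<close> assms(1,7) by (auto simp: frontier_def interior_open)
qed (use assms in \<open>auto simp: interior_open\<close>)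

lemma norm_exp_sector_damping_le:
  fixes m \<eta> :: real and w :: complex
  assumes "0 \<le> \<eta>" "0 \<le> Im w" "Im w \<le> m * Re w"
  shows "norm (exp (- (\<eta> * ((1 - \<i> * m) * w\<^sup>2)))) \<le> exp (- (\<eta> * norm w ^ 2))"
proof -
  have "Re ((1 - \<i> * m) * w\<^sup>2) - norm w ^ 2 = 2 * Im w * (m * Re w - Im w)"
    unfolding cmod_power2 by (simp add: power2_eq_square algebra_simps)
  also have "\<dots> \<ge> 0"
    using assms by simp
  finally show ?thesis
    using assms(1) by (simp add: norm_exp_eq_Re mult_left_mono)
qed

lemma Re_nonneg_of_sector:
  fixes m :: real
  assumes "0 < m" "0 \<le> Im w" "Im w \<le> m * Re w"
  shows "0 \<le> Re w"
proof -
  have "0 \<le> m * Re w"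
    using assms(2,3) by linarith
  then show ?thesis
    using assms(1) by (simp add: zero_le_mult_iff)
qed

lemma maximum_modulus_truncated_sector:
  fixes f :: "complex \<Rightarrow> complex" and m R B :: real
  assumes hol: "f holomorphic_on UNIV" and m: "0 < m"
    and boundary: "\<And>w. 0 \<le> Im w \<Longrightarrow> Im w \<le> m * Re w \<Longrightarrow> Re w \<le> R \<Longrightarrow>
      Im w = 0 \<or> Im w = m * Re w \<or> Re w = R \<Longrightarrow> norm (f w) \<le> B"
    and z: "0 < Im z" "Im z < m * Re z" "Re z < R"
  shows "norm (f z) \<le> B"
proof -
  define S where "S = {w. 0 < Im w \<and> Im w < m * Re w \<and> Re w < R}"
  define T where "T = {w. 0 \<le> Im w \<and> Im w \<le> m * Re w \<and> Re w \<le> R}"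
  show ?thesis
  proof (rule maximum_modulus_frontier_superset[of S T f])
    show "open S"
      unfolding S_def by (intro open_Collect_conj open_Collect_less continuous_intros)
    show "closed T"
      unfolding T_def by (intro closed_Collect_conj closed_Collect_le continuous_intros)
    show "S \<subseteq> T"
      by (auto simp: S_def T_def)
    have "norm w \<le> R + m * R" if "w \<in> S" for w
    proof -
      have "Re w < R" "\<bar>Im w\<bar> \<le> m * Re w" "0 \<le> Re w"
        using that Re_nonneg_of_sector[OF m, of w] by (auto simp: S_def)
      then show ?thesis
        using cmod_le[of w] mult_left_mono[of "Re w" R m] m by linarith
    qed
    then show "bounded S"
      unfolding bounded_iff by blast
    show "f holomorphic_on S" "continuous_on T f"
      using hol by (auto intro: holomorphic_on_subset holomorphic_on_imp_continuous_on continuous_on_subset)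
    show "z \<in> S"
      using z by (simp add: S_def)
    show "norm (f w) \<le> B" if "w \<in> T - S" for w
      using that by (intro boundary) (auto simp: S_def T_def)
  qed
qed

lemma phragmen_lindelof_sector_damped:
  fixes W :: "complex \<Rightarrow> complex" and m M A B \<eta> :: real
  assumes hol: "W holomorphic_on UNIV" and m: "0 < m" and \<eta>: "0 < \<eta>"
    and growth: "\<And>w. norm (W w) \<le> A * exp (B * norm w)"
    and edges: "\<And>w. 0 \<le> Re w \<Longrightarrow> Im w = 0 \<or> Im w = m * Re w \<Longrightarrow> norm (W w) \<le> M"
    and z: "0 < Im z" "Im z < m * Re z"
  shows "norm (W z) \<le> (M + \<eta>) * exp (\<eta> * Re ((1 - \<i> * m) * z\<^sup>2))"
proof -
  define D where "D w = exp (- (of_real \<eta> * ((1 - \<i> * m) * w\<^sup>2)))" for w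
  have D_le: "norm (D w) \<le> exp (- (\<eta> * norm w ^ 2))" if "0 \<le> Im w" "Im w \<le> m * Re w" for w
    unfolding D_def using norm_exp_sector_damping_le \<eta> that by simp
  have "0 \<le> M"
    using order_trans[OF norm_ge_zero edges[of 0]] by simp
  obtain R0 where R0: "\<And>r. R0 \<le> r \<Longrightarrow> A * exp (B * r) * exp (- (\<eta> * r\<^sup>2)) < \<eta>"
    using exp_linear_minus_quadratic_eventually_less[OF \<eta>] by blast
  have "norm (W z * D z) \<le> M + \<eta>"
  proof (rule maximum_modulus_truncated_sector[OF _ m _ z, of _ "max R0 (Re z + 1)"])
    show "(\<lambda>w. W w * D w) holomorphic_on UNIV"
      unfolding D_def by (intro holomorphic_intros hol)
    fix w assume w: "0 \<le> Im w" "Im w \<le> m * Re w"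
      and "Im w = 0 \<or> Im w = m * Re w \<or> Re w = max R0 (Re z + 1)"
    then have "(Im w = 0 \<or> Im w = m * Re w) \<or> R0 \<le> norm w"
      using abs_Re_le_cmod[of w] by auto
    then consider "Im w = 0 \<or> Im w = m * Re w" | "R0 \<le> norm w"
      by blast
    then show "norm (W w * D w) \<le> M + \<eta>"
    proof cases
      case 1
      have "norm (D w) \<le> 1"
        using order_trans[OF D_le[OF w]] \<eta> by simp
      then have "norm (W w * D w) \<le> M * 1"
        unfolding norm_mult using edges[OF Re_nonneg_of_sector[OF m w] 1] \<open>0 \<le> M\<close>
        by (intro mult_mono) auto
      then show ?thesis
        using \<eta> by simp
    next
      case 2
      have "norm (W w * D w) \<le> A * exp (B * norm w) * exp (- (\<eta> * norm w ^ 2))"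
        unfolding norm_mult using growth[of w] D_le[OF w] order_trans[OF norm_ge_zero growth]
        by (intro mult_mono) auto
      also have "\<dots> < \<eta>"
        using R0[OF 2] .
      finally show ?thesis
        using \<open>0 \<le> M\<close> by linarith
    qed
  qed (simp add: z)
  moreover have "norm (D z) * exp (\<eta> * Re ((1 - \<i> * m) * z\<^sup>2)) = 1"
    by (simp add: D_def norm_exp_eq_Re flip: exp_add)
  then have "norm (W z) = norm (W z * D z) * exp (\<eta> * Re ((1 - \<i> * m) * z\<^sup>2))"
    by (simp add: norm_mult mult.assoc)
  ultimately show ?thesis
    by (simp add: mult_right_mono)
qed

lemma phragmen_lindelof_sector:
  fixes W :: "complex \<Rightarrow> complex" and m M A B :: real
  assumes hol: "W holomorphic_on UNIV" and m: "0 < m"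
    and growth: "\<And>w. norm (W w) \<le> A * exp (B * norm w)"
    and edges: "\<And>w. 0 \<le> Re w \<Longrightarrow> Im w = 0 \<or> Im w = m * Re w \<Longrightarrow> norm (W w) \<le> M"
    and z: "0 \<le> Im z" "Im z \<le> m * Re z"
  shows "norm (W z) \<le> M"
proof (cases "Im z = 0 \<or> Im z = m * Re z")
  case True
  moreover have "0 \<le> Re z"
    using Re_nonneg_of_sector[OF m z] .
  ultimately show ?thesis
    by (rule edges[rotated])
next
  case False
  with z have "0 < Im z" "Im z < m * Re z"
    by auto
  then have "norm (W z) \<le> (M + \<eta>) * exp (\<eta> * Re ((1 - \<i> * m) * z\<^sup>2))" if "0 < \<eta>" for \<eta>
    using phragmen_lindelof_sector_damped[OF hol m that growth edges] by blast
  moreover have "((\<lambda>\<eta>. (M + \<eta>) * exp (\<eta> * Re ((1 - \<i> * m) * z\<^sup>2)))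
      \<longlongrightarrow> (M + 0) * exp (0 * Re ((1 - \<i> * m) * z\<^sup>2))) (at_right 0)"
    by (intro tendsto_intros)
  ultimately show ?thesis
    using tendsto_at_right_0_lowerbound by force
qed

lemma holomorphic_on_UNIV_reflect:
  "H holomorphic_on UNIV \<Longrightarrow> (\<lambda>w. H (- w)) holomorphic_on UNIV"
  using holomorphic_on_compose_gen[OF holomorphic_on_minus[OF holomorphic_on_ident], of H UNIV]
  by (simp add: o_def)

lemma phragmen_lindelof_upper_half_plane_cone:
  fixes H :: "complex \<Rightarrow> complex" and m M A B :: real
  assumes hol: "H holomorphic_on UNIV" and m: "0 < m"
    and growth: "\<And>w. norm (H w) \<le> A * exp (B * norm w)"
    and real_or_cone: "\<And>w. Im w = 0 \<or> m * \<bar>Re w\<bar> \<le> Im w \<Longrightarrow> norm (H w) \<le> M"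
    and z: "0 \<le> Im z"
  shows "norm (H z) \<le> M"
proof -
  have "m * \<bar>Re z\<bar> \<le> Im z \<or> Im z < m * Re z \<or> Im z < m * - Re z"
    by (auto simp: abs_if)
  then consider "m * \<bar>Re z\<bar> \<le> Im z" | "Im z < m * Re z" | "Im z < m * - Re z"
    by blast
  then show ?thesis
  proof cases
    case 1
    then show ?thesis
      by (rule real_or_cone[OF disjI2])
  next
    case 2
    show ?thesis
    proof (rule phragmen_lindelof_sector[OF hol m growth])
      show "norm (H w) \<le> M" if "0 \<le> Re w" "Im w = 0 \<or> Im w = m * Re w" for w
        using that by (intro real_or_cone) auto
    qed (use z 2 in auto)
  next
    case 3
    \<comment> \<open>\<open>u \<mapsto> - cnj u\<close> maps the left sector onto the right one; conjugating the values
      as well keeps \<open>K\<close> holomorphic.\<close>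
    define K where "K u = cnj (H (- cnj u))" for u
    have "K holomorphic_on UNIV"
      unfolding K_def[abs_def] using holomorphic_on_compose_cnj_cnj[of "\<lambda>w. H (- w)" UNIV]
        holomorphic_on_UNIV_reflect[OF hol]
      by (auto simp: o_def holomorphic_on_subset)
    moreover have "norm (K u) \<le> A * exp (B * norm u)" for u
      using growth[of "- cnj u"] by (simp add: K_def)
    ultimately have "norm (K (- cnj z)) \<le> M"
    proof (rule phragmen_lindelof_sector[OF _ m])
      show "norm (K w) \<le> M" if "0 \<le> Re w" "Im w = 0 \<or> Im w = m * Re w" for w
        using that real_or_cone[of "- cnj w"] by (auto simp: K_def)
    qed (use z 3 in auto)
    then show ?thesis
      by (simp add: K_def)
  qed
qed

lemma norm_le_if_Im_eq_0:
  fixes f :: "complex \<Rightarrow> 'a::real_normed_vector"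
  assumes "\<And>x::real. norm (f x) \<le> L" and "Im w = 0"
  shows "norm (f w) \<le> L"
proof -
  have "w = of_real (Re w)"
    using assms(2) by (simp add: complex_eq_iff)
  then show ?thesis
    by (metis assms(1))
qed

lemma norm_one_minus_ii_mult_lower_bounds:
  fixes \<eta> :: real and w :: complex
  assumes "0 \<le> \<eta>" "0 \<le> Im w"
  shows "1 \<le> norm (1 - \<i> * \<eta> * w)" and "\<eta> * norm w \<le> norm (1 - \<i> * \<eta> * w)"
proof -
  have sq: "norm (1 - \<i> * \<eta> * w) ^ 2 = \<eta>\<^sup>2 * norm w ^ 2 + 1 + 2 * \<eta> * Im w"
    unfolding cmod_power2 by (simp add: power2_eq_square algebra_simps)
  have "0 \<le> \<eta> * Im w"
    using assms by simp
  then have "1 ^ 2 \<le> norm (1 - \<i> * \<eta> * w) ^ 2" "(\<eta> * norm w) ^ 2 \<le> norm (1 - \<i> * \<eta> * w) ^ 2"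
    unfolding sq by (simp_all add: power_mult_distrib)
  then show "1 \<le> norm (1 - \<i> * \<eta> * w)" "\<eta> * norm w \<le> norm (1 - \<i> * \<eta> * w)"
    by (metis power2_le_imp_le norm_ge_zero)+
qed

lemma maximum_modulus_half_square:
  fixes f :: "complex \<Rightarrow> complex" and R B :: real
  assumes hol: "f holomorphic_on {w. 0 \<le> Im w}"
    and boundary: "\<And>w. \<bar>Re w\<bar> \<le> R \<Longrightarrow> 0 \<le> Im w \<Longrightarrow> Im w \<le> R \<Longrightarrow>
      \<bar>Re w\<bar> = R \<or> Im w = 0 \<or> Im w = R \<Longrightarrow> norm (f w) \<le> B"
    and z: "\<bar>Re z\<bar> < R" "0 < Im z" "Im z < R"
  shows "norm (f z) \<le> B"
proof -
  define S where "S = {w. \<bar>Re w\<bar> < R \<and> 0 < Im w \<and> Im w < R}"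
  define T where "T = {w. \<bar>Re w\<bar> \<le> R \<and> 0 \<le> Im w \<and> Im w \<le> R}"
  show ?thesis
  proof (rule maximum_modulus_frontier_superset[of S T f])
    show "open S"
      unfolding S_def by (intro open_Collect_conj open_Collect_less continuous_intros)
    show "closed T"
      unfolding T_def by (intro closed_Collect_conj closed_Collect_le continuous_intros)
    show "S \<subseteq> T"
      by (auto simp: S_def T_def)
    have "norm w \<le> R + R" if "w \<in> S" for w
      using that cmod_le[of w] by (auto simp: S_def)
    then show "bounded S"
      unfolding bounded_iff by blast
    have "T \<subseteq> {w. 0 \<le> Im w}"
      by (auto simp: T_def)
    then show "f holomorphic_on S" "continuous_on T f"
      using hol \<open>S \<subseteq> T\<close>
      by (auto intro: holomorphic_on_subset holomorphic_on_imp_continuous_on)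
    show "z \<in> S"
      using z by (simp add: S_def)
    show "norm (f w) \<le> B" if "w \<in> T - S" for w
      using that by (intro boundary) (auto simp: S_def T_def)
  qed
qed

lemma phragmen_lindelof_half_plane_damped:
  fixes H :: "complex \<Rightarrow> complex" and L M \<eta> :: real
  assumes hol: "H holomorphic_on UNIV" and \<eta>: "0 < \<eta>"
    and real_bound: "\<And>x::real. norm (H x) \<le> L"
    and bounded: "\<And>w. 0 \<le> Im w \<Longrightarrow> norm (H w) \<le> M"
    and z: "0 < Im z"
  shows "norm (H z) \<le> (L + \<eta>) * norm (1 - \<i> * \<eta> * z)"
proof -
  define d where "d w = 1 - \<i> * \<eta> * w" for w
  have d_ge: "1 \<le> norm (d w)" "\<eta> * norm w \<le> norm (d w)" if "0 \<le> Im w" for w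
    unfolding d_def using norm_one_minus_ii_mult_lower_bounds \<eta> that by auto
  have "0 \<le> L" "0 \<le> M"
    using order_trans[OF norm_ge_zero real_bound[of 0]] order_trans[OF norm_ge_zero bounded[of 0]]
    by auto
  define R where "R = max (\<bar>Re z\<bar> + Im z + 1) (M / \<eta>\<^sup>2 + 1)"
  have "0 < R"
    using z by (simp add: R_def)
  have "norm (H z / d z) \<le> L + \<eta>"
  proof (rule maximum_modulus_half_square[where f = "\<lambda>w. H w / d w" and R = R])
    show "(\<lambda>w. H w / d w) holomorphic_on {w. 0 \<le> Im w}"
      unfolding d_def using d_ge(1)
      by (intro holomorphic_intros holomorphic_on_subset[OF hol]) (force simp: d_def)+
    fix w assume w: "\<bar>Re w\<bar> \<le> R" "0 \<le> Im w" "Im w \<le> R" "\<bar>Re w\<bar> = R \<or> Im w = 0 \<or> Im w = R"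
    show "norm (H w / d w) \<le> L + \<eta>"
    proof (cases "Im w = 0")
      case True
      then have "norm (H w / d w) \<le> L / 1"
        unfolding norm_divide
        using norm_le_if_Im_eq_0[where f = H, OF real_bound True] d_ge(1)[OF \<open>0 \<le> Im w\<close>] \<open>0 \<le> L\<close>
        by (intro frac_le) auto
      then show ?thesis
        using \<eta> by simp
    next
      case False
      with w have "R \<le> norm w"
        using abs_Re_le_cmod[of w] abs_Im_le_cmod[of w] by auto
      then have "\<eta> * R \<le> norm (d w)"
        using d_ge(2)[OF \<open>0 \<le> Im w\<close>] \<eta> by (meson mult_left_mono less_imp_le order_trans)
      then have "norm (H w / d w) \<le> M / (\<eta> * R)"
        unfolding norm_divide using bounded[OF \<open>0 \<le> Im w\<close>] \<open>0 \<le> M\<close> \<eta> \<open>0 < R\<close>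
        by (intro frac_le) auto
      also have "M / \<eta>\<^sup>2 \<le> R"
        by (simp add: R_def)
      then have "M \<le> \<eta> * (\<eta> * R)"
        using \<eta> by (simp add: pos_divide_le_eq power2_eq_square algebra_simps)
      then have "M / (\<eta> * R) \<le> \<eta>"
        using \<eta> \<open>0 < R\<close> by (simp add: pos_divide_le_eq algebra_simps)
      finally show ?thesis
        using \<open>0 \<le> L\<close> by simp
    qed
  qed (use z in \<open>auto simp: R_def\<close>)
  moreover have "d z \<noteq> 0"
    using d_ge(1)[of z] z by auto
  ultimately show ?thesis
    by (simp add: norm_divide divide_le_eq flip: d_def)
qed

lemma phragmen_lindelof_half_plane:
  fixes H :: "complex \<Rightarrow> complex" and L M :: real
  assumes hol: "H holomorphic_on UNIV"
    and real_bound: "\<And>x::real. norm (H x) \<le> L"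
    and bounded: "\<And>w. 0 \<le> Im w \<Longrightarrow> norm (H w) \<le> M"
    and z: "0 \<le> Im z"
  shows "norm (H z) \<le> L"
proof (cases "Im z = 0")
  case True
  then show ?thesis
    by (rule norm_le_if_Im_eq_0[where f = H, OF real_bound])
next
  case False
  with z have "0 < Im z"
    by simp
  then have "norm (H z) \<le> (L + \<eta>) * norm (1 - \<i> * \<eta> * z)" if "0 < \<eta>" for \<eta>
    using phragmen_lindelof_half_plane_damped[OF hol that real_bound bounded] by blast
  moreover have "((\<lambda>\<eta>. (L + \<eta>) * norm (1 - \<i> * of_real \<eta> * z))
      \<longlongrightarrow> (L + 0) * norm (1 - \<i> * of_real 0 * z)) (at_right 0)"
    by (intro tendsto_intros)
  ultimately show ?thesis
    using tendsto_at_right_0_lowerbound by force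
qed

section \<open>Functions of exponential type\<close>

lemma mult_norm_le_Im_in_cone:
  fixes s \<tau> :: real and w :: complex
  assumes s: "0 < s" "s < \<tau>" and cone: "s / (\<tau> - s) * \<bar>Re w\<bar> \<le> Im w"
  shows "s * norm w \<le> \<tau> * Im w"
proof -
  have "0 \<le> Im w"
    using order_trans[OF _ cone] s by simp
  have "s * norm w \<le> s * (\<bar>Re w\<bar> + Im w)"
    using cmod_le[of w] \<open>0 \<le> Im w\<close> s by (intro mult_left_mono) auto
  also have "\<dots> = (\<tau> - s) * (s / (\<tau> - s) * \<bar>Re w\<bar>) + s * Im w"
    using s by (simp add: field_simps)
  also have "\<dots> \<le> (\<tau> - s) * Im w + s * Im w"
    using mult_left_mono[OF cone, of "\<tau> - s"] s by simp
  finally show ?thesis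
    by (simp add: algebra_simps)
qed

lemma exp_type_at_mostD:
  assumes "exp_type_at_most F \<sigma>" and "0 < \<sigma>" and "\<sigma> < s"
  obtains C where "\<And>z. norm (F z) \<le> C * exp (s * norm z)"
proof -
  have "0 < s / \<sigma> - 1"
    using assms(2,3) by (simp add: field_simps)
  with assms(1) obtain C where "\<And>z. norm (F z) \<le> C * exp (\<sigma> * (1 + (s / \<sigma> - 1)) * norm z)"
    unfolding exp_type_at_most_def by blast
  with assms(2) have "\<And>z. norm (F z) \<le> C * exp (s * norm z)"
    by simp
  then show ?thesis
    by (rule that)
qed

lemma exp_type_times_exp_bounded_upper_half_plane:
  fixes G :: "complex \<Rightarrow> complex" and \<sigma> \<tau> L :: real
  assumes hol: "G holomorphic_on UNIV" and ty: "exp_type_at_most G \<sigma>"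
    and \<sigma>: "0 < \<sigma>" "\<sigma> < \<tau>"
    and real_bound: "\<And>x::real. norm (G x) \<le> L"
  obtains M where "\<And>w. 0 \<le> Im w \<Longrightarrow> norm (G w * exp (\<i> * \<tau> * w)) \<le> M"
proof -
  define s where "s = (\<sigma> + \<tau>) / 2"
  have s: "\<sigma> < s" "0 < s" "s < \<tau>"
    using \<sigma> by (auto simp: s_def)
  obtain C where C: "\<And>w. norm (G w) \<le> C * exp (s * norm w)"
    using exp_type_at_mostD[OF ty \<sigma>(1) s(1)] by blast
  define H where "H w = G w * exp (\<i> * \<tau> * w)" for w
  have norm_H: "norm (H w) = norm (G w) * exp (- (\<tau> * Im w))" for w
    by (simp add: H_def norm_mult norm_exp_eq_Re)
  define m where "m = s / (\<tau> - s)"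
  have "0 < m"
    using s by (simp add: m_def)
  have "0 \<le> C"
    using order_trans[OF norm_ge_zero C[of 0]] by simp
  have H_le: "norm (H w) \<le> C * exp (s * norm w - \<tau> * Im w)" for w
    unfolding norm_H exp_diff exp_minus using C[of w] by (simp add: divide_right_mono flip: divide_inverse)
  have cone: "norm (H w) \<le> C" if "m * \<bar>Re w\<bar> \<le> Im w" for w
  proof -
    have "exp (s * norm w - \<tau> * Im w) \<le> 1"
      using mult_norm_le_Im_in_cone[OF s(2,3) that[unfolded m_def]] by simp
    then show ?thesis
      using H_le[of w] mult_left_le[OF _ \<open>0 \<le> C\<close>] by (meson order_trans)
  qed
  have growth: "norm (H w) \<le> C * exp ((s + \<tau>) * norm w)" for w
  proof -
    have "- Im w \<le> norm w"
      using abs_Im_le_cmod[of w] by linarith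
    then have "- (\<tau> * Im w) \<le> \<tau> * norm w"
      using mult_left_mono[of "- Im w" "norm w" \<tau>] s by simp
    then have "exp (s * norm w - \<tau> * Im w) \<le> exp ((s + \<tau>) * norm w)"
      by (simp add: distrib_right)
    then show ?thesis
      using H_le[of w] mult_left_mono[OF _ \<open>0 \<le> C\<close>] by (meson order_trans)
  qed
  have "norm (H w) \<le> max L C" if "0 \<le> Im w" for w
  proof (rule phragmen_lindelof_upper_half_plane_cone[OF _ \<open>0 < m\<close> growth _ that])
    show "H holomorphic_on UNIV"
      unfolding H_def by (intro holomorphic_intros hol)
    have "norm (H x) \<le> L" for x :: real
      using real_bound[of x] by (simp add: norm_H)
    then show "norm (H u) \<le> max L C" if "Im u = 0 \<or> m * \<bar>Re u\<bar> \<le> Im u" for u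
      using that norm_le_if_Im_eq_0[of H L u] cone[of u] by force
  qed
  then show ?thesis
    by (intro that) (simp add: H_def)
qed

lemma exp_type_bound_upper_half_plane:
  fixes G :: "complex \<Rightarrow> complex" and \<sigma> L :: real
  assumes hol: "G holomorphic_on UNIV" and ty: "exp_type_at_most G \<sigma>" and \<sigma>: "0 < \<sigma>"
    and real_bound: "\<And>x::real. norm (G x) \<le> L"
    and z: "0 \<le> Im z"
  shows "norm (G z) \<le> L * exp (\<sigma> * Im z)"
proof -
  have "norm (G z) \<le> L * exp ((\<sigma> + e) * Im z)" if "0 < e" for e
  proof -
    define H where "H w = G w * exp (\<i> * (\<sigma> + e) * w)" for w
    have norm_H: "norm (H w) = norm (G w) * exp (- ((\<sigma> + e) * Im w))" for w
      by (simp add: H_def norm_mult norm_exp_eq_Re)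
    obtain M where "\<And>w. 0 \<le> Im w \<Longrightarrow> norm (H w) \<le> M"
      using exp_type_times_exp_bounded_upper_half_plane[OF hol ty \<sigma>, of "\<sigma> + e"] real_bound \<open>0 < e\<close>
      unfolding H_def by auto
    moreover have "H holomorphic_on UNIV"
      unfolding H_def by (intro holomorphic_intros hol)
    moreover have "norm (H x) \<le> L" for x :: real
      using real_bound[of x] by (simp add: norm_H)
    ultimately have "norm (H z) \<le> L"
      using phragmen_lindelof_half_plane z by blast
    then have "norm (G z) * exp (- ((\<sigma> + e) * Im z)) * exp ((\<sigma> + e) * Im z)
        \<le> L * exp ((\<sigma> + e) * Im z)"
      unfolding norm_H by (intro mult_right_mono) auto
    then show ?thesis
      by (simp add: mult.assoc flip: exp_add)
  qed
  moreover have "((\<lambda>e. L * exp ((\<sigma> + e) * Im z)) \<longlongrightarrow> L * exp ((\<sigma> + 0) * Im z)) (at_right 0)"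
    by (intro tendsto_intros)
  ultimately show ?thesis
    using tendsto_at_right_0_lowerbound by force
qed

lemma exp_type_bound:
  fixes G :: "complex \<Rightarrow> complex" and \<sigma> L :: real
  assumes hol: "G holomorphic_on UNIV" and ty: "exp_type_at_most G \<sigma>" and \<sigma>: "0 < \<sigma>"
    and real_bound: "\<And>x::real. norm (G x) \<le> L"
  shows "norm (G z) \<le> L * exp (\<sigma> * \<bar>Im z\<bar>)"
proof (cases "0 \<le> Im z")
  case True
  then show ?thesis
    using exp_type_bound_upper_half_plane[OF assms] by simp
next
  case False
  have "exp_type_at_most (\<lambda>w. G (- w)) \<sigma>"
    using ty unfolding exp_type_at_most_def by (metis norm_minus_cancel)
  then have "norm (G (- (- z))) \<le> L * exp (\<sigma> * Im (- z))"
    using False real_bound[of "- _"]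
    by (intro exp_type_bound_upper_half_plane[OF holomorphic_on_UNIV_reflect[OF hol] _ \<sigma>]) auto
  then show ?thesis
    using False by simp
qed

lemma exp_type_at_most_primitive:
  fixes F G :: "complex \<Rightarrow> complex"
  assumes G': "\<And>z. (G has_field_derivative F z) (at z)" and "G 0 = 0"
    and ty: "exp_type_at_most F \<sigma>" and \<sigma>: "0 < \<sigma>"
  shows "exp_type_at_most G \<sigma>"
  unfolding exp_type_at_most_def
proof (intro allI impI)
  fix \<epsilon> :: real
  assume "0 < \<epsilon>"
  define b where "b = \<sigma> * \<epsilon> / 2"
  have "0 < b"
    using \<sigma> \<open>0 < \<epsilon>\<close> by (simp add: b_def)
  obtain C where C: "\<And>z. norm (F z) \<le> C * exp ((\<sigma> + b) * norm z)"
    using exp_type_at_mostD[OF ty \<sigma>, of "\<sigma> + b"] \<open>0 < b\<close> by auto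
  have "0 \<le> C"
    using order_trans[OF norm_ge_zero C[of 0]] by simp
  have "norm (G z) \<le> C / b * exp (\<sigma> * (1 + \<epsilon>) * norm z)" for z
  proof -
    have "norm (G z - G 0) \<le> C * exp ((\<sigma> + b) * norm z) * norm (z - 0)"
    proof (rule field_differentiable_bound[of "closed_segment 0 z"])
      show "(G has_field_derivative F u) (at u within closed_segment 0 z)" for u
        using G' by (rule has_field_derivative_at_within)
      show "norm (F u) \<le> C * exp ((\<sigma> + b) * norm z)" if "u \<in> closed_segment 0 z" for u
      proof -
        have "norm u \<le> norm z"
          using dist_in_closed_segment[OF that] by simp
        then have "(\<sigma> + b) * norm u \<le> (\<sigma> + b) * norm z"
          using \<sigma> \<open>0 < b\<close> by (simp add: mult_left_mono)
        then show ?thesis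
          using C[of u] mult_left_mono[OF _ \<open>0 \<le> C\<close>] by (meson exp_le_cancel_iff order_trans)
      qed
    qed auto
    then have "norm (G z) \<le> C * exp ((\<sigma> + b) * norm z) * norm z"
      using \<open>G 0 = 0\<close> by simp
    also have "\<dots> \<le> C * exp ((\<sigma> + b) * norm z) * (exp (b * norm z) / b)"
    proof (intro mult_left_mono)
      have "b * norm z \<le> exp (b * norm z)"
        using exp_ge_add_one_self[of "b * norm z"] by linarith
      then show "norm z \<le> exp (b * norm z) / b"
        using \<open>0 < b\<close> by (simp add: pos_le_divide_eq mult.commute)
    qed (use \<open>0 \<le> C\<close> in simp)
    also have "\<dots> = C / b * exp (\<sigma> * (1 + \<epsilon>) * norm z)"
      by (simp add: b_def field_simps flip: exp_add)
    finally show ?thesis .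
  qed
  then show "\<exists>C. \<forall>z. norm (G z) \<le> C * exp (\<sigma> * (1 + \<epsilon>) * norm z)"
    by blast
qed

lemma norm_primitive_le_integral_norm:
  fixes F G :: "complex \<Rightarrow> complex" and x :: real
  assumes G': "\<And>z. (G has_field_derivative F z) (at z)" and "G 0 = 0"
    and int: "(\<lambda>x::real. F x) absolutely_integrable_on UNIV"
  shows "norm (G x) \<le> integral UNIV (\<lambda>x::real. norm (F x))"
proof -
  have int_F: "(\<lambda>x::real. F x) integrable_on UNIV"
    and int_norm: "(\<lambda>x::real. norm (F x)) integrable_on UNIV"
    using int unfolding absolutely_integrable_on_def by auto
  have *: "norm (G b - G a) \<le> integral UNIV (\<lambda>x::real. norm (F x))" if "a \<le> b" for a b :: real
  proof -
    have "((\<lambda>t. F t) has_integral (G \<circ> of_real) b - (G \<circ> of_real) a) {a..b}"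
    proof (rule fundamental_theorem_of_calculus[OF that])
      show "((G \<circ> of_real) has_vector_derivative F t) (at t within {a..b})" for t
        by (rule has_complex_derivative_imp_has_vector_derivative)
          (rule has_field_derivative_at_within[OF G'])
    qed
    then have "G b - G a = integral {a..b} (\<lambda>t. F t)"
      by (simp add: integral_unique)
    also have "norm \<dots> \<le> integral {a..b} (\<lambda>t. norm (F t))"
      by (rule integral_norm_bound_integral)
        (auto intro: integrable_on_subinterval[OF int_F] integrable_on_subinterval[OF int_norm])
    also have "\<dots> \<le> integral UNIV (\<lambda>x::real. norm (F x))"
      by (rule integral_subset_le) (auto intro: integrable_on_subinterval[OF int_norm] int_norm)
    finally show ?thesis .
  qed
  show ?thesis
  proof (cases "0 \<le> x")
    case True
    then show ?thesis
      using *[of 0 x] \<open>G 0 = 0\<close> by simp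
  next
    case False
    then show ?thesis
      using *[of x 0] \<open>G 0 = 0\<close> by (simp add: norm_minus_commute)
  qed
qed

lemma exp_abs_le_2_cosh: "exp \<bar>x\<bar> \<le> 2 * cosh (x::real)"
  using sinh_le_cosh_real[of "\<bar>x\<bar>"] by (simp add: sinh_plus_cosh[symmetric])

lemma abs_Im_le_closed_segment_0:
  assumes "u \<in> closed_segment 0 w"
  shows "\<bar>Im u\<bar> \<le> \<bar>Im w\<bar>"
proof -
  obtain t where "0 \<le> t" "t \<le> 1" "u = t *\<^sub>R w"
    using assms by (auto simp: in_segment)
  then show ?thesis
    by (simp add: abs_mult mult_left_le_one_le)
qed

lemma norm_second_deriv_le_of_strip_bound:
  fixes G :: "complex \<Rightarrow> complex" and \<sigma> L :: real
  assumes hol: "G holomorphic_on UNIV" and \<sigma>: "0 < \<sigma>"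
    and bound: "\<And>z. norm (G z) \<le> L * exp (\<sigma> * \<bar>Im z\<bar>)"
  shows "norm ((deriv ^^ 2) G \<xi>) \<le> 2 * exp 1 * L * \<sigma>\<^sup>2 * exp (\<sigma> * \<bar>Im \<xi>\<bar>)"
proof -
  have "0 \<le> L"
    using order_trans[OF norm_ge_zero bound[of 0]] by simp
  have "norm ((deriv ^^ 2) G \<xi>) \<le> fact 2 * (L * exp (\<sigma> * \<bar>Im \<xi>\<bar> + 1)) / (1 / \<sigma>) ^ 2"
  proof (rule Cauchy_inequality)
    show "G holomorphic_on ball \<xi> (1 / \<sigma>)" "continuous_on (cball \<xi> (1 / \<sigma>)) G"
      using hol by (auto intro: holomorphic_on_subset holomorphic_on_imp_continuous_on continuous_on_subset)
    show "norm (G w) \<le> L * exp (\<sigma> * \<bar>Im \<xi>\<bar> + 1)" if "norm (\<xi> - w) = 1 / \<sigma>" for w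
    proof -
      have "\<bar>Im w\<bar> \<le> \<bar>Im \<xi>\<bar> + 1 / \<sigma>"
        using abs_Im_le_cmod[of "\<xi> - w"] that by simp
      then have "\<sigma> * \<bar>Im w\<bar> \<le> \<sigma> * \<bar>Im \<xi>\<bar> + 1"
        using \<sigma> by (simp add: field_simps)
      then show ?thesis
        using bound[of w] mult_left_mono[OF _ \<open>0 \<le> L\<close>] by (meson exp_le_cancel_iff order_trans)
    qed
  qed (use \<sigma> in simp)
  then show ?thesis
    using \<sigma> by (simp add: exp_add power_divide field_simps)
qed

lemma norm_deriv_le_exp_type_integrable:
  fixes F :: "complex \<Rightarrow> complex" and \<sigma> :: real
  assumes hol: "F holomorphic_on UNIV" and ty: "exp_type_at_most F \<sigma>" and \<sigma>: "0 < \<sigma>"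
    and int: "(\<lambda>x::real. F x) absolutely_integrable_on UNIV"
  shows "norm (deriv F \<xi>)
    \<le> 2 * exp 1 * integral UNIV (\<lambda>x::real. norm (F x)) * \<sigma>\<^sup>2 * exp (\<sigma> * \<bar>Im \<xi>\<bar>)"
proof -
  obtain g where g: "\<And>z. (g has_field_derivative F z) (at z)"
    using holomorphic_convex_primitive'[of UNIV F] hol by auto
  define G where "G z = g z - g 0" for z
  have G': "(G has_field_derivative F z) (at z)" for z
    unfolding G_def using g[of z] by (auto intro!: derivative_eq_intros)
  have "G 0 = 0"
    by (simp add: G_def)
  have "G holomorphic_on UNIV"
    using G' by (auto simp: holomorphic_on_open)
  moreover have "norm (G z) \<le> integral UNIV (\<lambda>x::real. norm (F x)) * exp (\<sigma> * \<bar>Im z\<bar>)" for z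
    using exp_type_bound[OF \<open>G holomorphic_on UNIV\<close> exp_type_at_most_primitive[OF G' \<open>G 0 = 0\<close> ty \<sigma>] \<sigma>]
      norm_primitive_le_integral_norm[OF G' \<open>G 0 = 0\<close> int] by blast
  moreover have "deriv G = F"
    using G' by (simp add: DERIV_imp_deriv fun_eq_iff)
  then have "(deriv ^^ 2) G = deriv F"
    by (simp add: numeral_2_eq_2)
  ultimately show ?thesis
    using norm_second_deriv_le_of_strip_bound[OF _ \<sigma>] by metis
qed

lemma norm_le_of_root_deriv_bound:
  fixes F :: "complex \<Rightarrow> complex" and K \<sigma> :: real
  assumes hol: "F holomorphic_on UNIV" and "F \<omega> = 0" and "0 \<le> \<sigma>"
    and deriv_bound: "\<And>u. norm (deriv F u) \<le> K * exp (\<sigma> * \<bar>Im u\<bar>)"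
  shows "norm (F 0) \<le> K * exp (\<sigma> * \<bar>Im \<omega>\<bar>) * norm \<omega>"
proof -
  have "0 \<le> K"
    using order_trans[OF norm_ge_zero deriv_bound[of 0]] by simp
  have "norm (F 0 - F \<omega>) \<le> K * exp (\<sigma> * \<bar>Im \<omega>\<bar>) * norm (0 - \<omega>)"
  proof (rule field_differentiable_bound[of "closed_segment 0 \<omega>"])
    show "(F has_field_derivative deriv F u) (at u within closed_segment 0 \<omega>)" for u
      using hol by (auto intro: holomorphic_derivI)
    show "norm (deriv F u) \<le> K * exp (\<sigma> * \<bar>Im \<omega>\<bar>)" if "u \<in> closed_segment 0 \<omega>" for u
      using deriv_bound[of u] abs_Im_le_closed_segment_0[OF that] \<open>0 \<le> \<sigma>\<close> \<open>0 \<le> K\<close>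
      by (meson exp_le_cancel_iff mult_left_mono order_trans)
  qed auto
  then show ?thesis
    using \<open>F \<omega> = 0\<close> by simp
qed

theorem corollary12:
  "\<exists>c>0. \<forall>(\<sigma>::real) (F::complex \<Rightarrow> complex) (\<omega>::complex).
     \<sigma> > 0 \<longrightarrow> F holomorphic_on UNIV \<longrightarrow> exp_type_at_most F \<sigma> \<longrightarrow>
     (\<lambda>x::real. F (complex_of_real x)) absolutely_integrable_on UNIV \<longrightarrow>
     Im (F 0) = 0 \<longrightarrow> Re (F 0) \<ge> 1 \<longrightarrow> F \<omega> = 0 \<longrightarrow>
     1 \<le> c * integral UNIV (\<lambda>x::real. norm (F (complex_of_real x))) * \<sigma>\<^sup>2
            * norm \<omega> * cosh (\<sigma> * Im \<omega>)"
proof (intro exI[of _ "4 * exp 1"] conjI allI impI)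
  fix \<sigma> :: real and F :: "complex \<Rightarrow> complex" and \<omega> :: complex
  assume \<sigma>: "\<sigma> > 0" and hol: "F holomorphic_on UNIV" and ty: "exp_type_at_most F \<sigma>"
    and int: "(\<lambda>x::real. F x) absolutely_integrable_on UNIV"
    and "Im (F 0) = 0" "Re (F 0) \<ge> 1" "F \<omega> = 0"
  define K where "K = 2 * exp 1 * integral UNIV (\<lambda>x::real. norm (F x)) * \<sigma>\<^sup>2"
  have "0 \<le> K"
    unfolding K_def by (intro mult_nonneg_nonneg integral_nonneg)
      (use int in \<open>auto simp: absolutely_integrable_on_def\<close>)
  have "1 \<le> norm (F 0)"
    using \<open>Re (F 0) \<ge> 1\<close> complex_Re_le_cmod[of "F 0"] by linarith
  also have "\<dots> \<le> K * exp (\<sigma> * \<bar>Im \<omega>\<bar>) * norm \<omega>"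
    using norm_le_of_root_deriv_bound[OF hol \<open>F \<omega> = 0\<close>]
      norm_deriv_le_exp_type_integrable[OF hol ty \<sigma> int] \<sigma>
    unfolding K_def by simp
  also have "\<dots> \<le> K * (2 * cosh (\<sigma> * Im \<omega>)) * norm \<omega>"
    using exp_abs_le_2_cosh[of "\<sigma> * Im \<omega>"] \<open>0 \<le> K\<close> \<sigma>
    by (intro mult_right_mono mult_left_mono) (auto simp: abs_mult)
  finally show "1 \<le> 4 * exp 1 * integral UNIV (\<lambda>x::real. norm (F x)) * \<sigma>\<^sup>2 * norm \<omega> * cosh (\<sigma> * Im \<omega>)"
    by (simp add: K_def algebra_simps)
qed simp

end
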